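(* Consider the looped Markov chain $\mathcal{G}'$ described in the context, with parameters $r\ge1$, $p,p_c\in[0,1]$, and let $\nu=p\cdot p_c$ with $\nu\cdot r<1$. Then $m_\sharp(s_i^\alpha)\in\Theta(\nu^{-t})$ for $\alpha=\alpha_1\cdots\alpha_t$, i.e. there are constants $0<c_1\le c_2<\infty$ depending only on $r,p,p_c$ such that $c_1\nu^{-t}\le m_\sharp(s_i^\alpha)\le c_2\nu^{-t}$ for all $t\ge0$, all $\alpha\in\{1,\ldots,r\}^t$ and all $1\le i\le r$.
   Context: Fix an integer $r\ge1$ and probabilities $p,p_c\in[0,1]$. Words $\alpha\in\{1,\ldots,r\}^*$ (finite sequences, $\varepsilon$ empty word, $\alpha\cdot i$ concatenation, $r^k$ the word of $k$ letters $r$) are called blocks. The Markov chain $\mathcal{G}'$ has the countable state space $\{s_i^\alpha, c_i^\alpha : 1\le i\le r,\ \alpha\in\{1,\ldots,r\}^*\}\cup\{\sharp\}$, initial state $\sharp$, and transition probabilities (all unlisted ones are $0$): $p(\sharp,s_1^\varepsilon)=1$; $p(s_i^\alpha,c_i^\alpha)=p$ for $1\le i\le r$; $p(s_i^\alpha,s_{i+1}^\alpha)=1-p$ for $1\le i<r$; $p(c_i^\alpha,s_1^{\alpha\cdot i})=p_c$ for $1\le i\le r$; $p(c_i^\alpha,s_{i+1}^\alpha)=1-p_c$ for $1\le i<r$; for every word $\gamma=\beta\cdot i\cdot r^k$ with $1\le i<r$, $k\ge0$: $p(s_r^\gamma,s_{i+1}^\beta)=1-p$, $p(c_r^\gamma,s_{i+1}^\beta)=1-p_c$;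 for every $\gamma\in r^*$ (including $\varepsilon$): $p(s_r^\gamma,\sharp)=1-p$, $p(c_r^\gamma,\sharp)=1-p_c$. For states $x,y$, $m_x(y)$ denotes the expected value of $\inf\{n\ge0: X_n=y\}$ for the chain $(X_n)$ started at $X_0=x$. *)

theory Defs
  imports "HOL-Analysis.Analysis"
begin

text \<open>States of the looped chain G': the initial state sharp, s_i^alpha and c_i^alpha.
  Blocks alpha are words over {1..r}, represented as lists of naturals (letters in {1..r}).\<close>
datatype state = Sharp | S nat "nat list" | C nat "nat list"

text \<open>Return target of s_r^gamma / c_r^gamma: for gamma = beta.i.r^k with i < r it is
  s_{i+1}^beta; for gamma in r^* it is sharp.\<close>
definition ret :: "nat \<Rightarrow> nat list \<Rightarrow> state" where
  "ret r \<gamma> = (let \<gamma>' = rev (dropWhile (\<lambda>x. x = r) (rev \<gamma>)) in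
      if \<gamma>' = [] then Sharp else S (last \<gamma>' + 1) (butlast \<gamma>'))"

definition nxt :: "nat \<Rightarrow> nat \<Rightarrow> nat list \<Rightarrow> state" where
  "nxt r i \<alpha> = (if i < r then S (i + 1) \<alpha> else ret r \<alpha>)"

text \<open>Transition probabilities of G' (the listed targets are pairwise distinct, so the
  sum form gives exactly the listed probabilities, all others 0).\<close>
definition trans :: "nat \<Rightarrow> real \<Rightarrow> real \<Rightarrow> state \<Rightarrow> state \<Rightarrow> real" where
  "trans r p pc x y = (case x of
       Sharp \<Rightarrow> (if y = S 1 [] then 1 else 0)
     | S i \<alpha> \<Rightarrow> (if y = C i \<alpha> then p else 0) + (if y = nxt r i \<alpha> then 1 - p else 0)
     | C i \<alpha> \<Rightarrow> (if y = S 1 (\<alpha> @ [i]) then pc else 0) + (if y = nxt r i \<alpha> then 1 - pc else 0))"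

text \<open>First-passage probabilities: fp n x y = P_x(inf{n >= 0. X_n = y} = n),
  i.e. the total probability of paths from x of length n that visit y first at step n.\<close>
fun fp :: "nat \<Rightarrow> real \<Rightarrow> real \<Rightarrow> nat \<Rightarrow> state \<Rightarrow> state \<Rightarrow> ennreal" where
  "fp r p pc 0 x y = (if x = y then 1 else 0)"
| "fp r p pc (Suc n) x y =
     (if x = y then 0 else (\<Sum>\<^sub>\<infinity>z. ennreal (trans r p pc x z) * fp r p pc n z y))"

text \<open>Expected hitting time m_x(y) = E_x[inf{n >= 0. X_n = y}] with values in [0,\<infinity>]:
  the sum of n * P(T = n) plus \<infinity> * P(T = \<infinity>).\<close>
definition hit_time :: "nat \<Rightarrow> real \<Rightarrow> real \<Rightarrow> state \<Rightarrow> state \<Rightarrow> ennreal" where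
  "hit_time r p pc x y =
     (\<Sum>n. of_nat n * fp r p pc n x y) + (if (\<Sum>n. fp r p pc n x y) < 1 then \<infinity> else 0)"

end

theory Submission
  imports Defs
begin

text \<open>Write \<open>\<nu> = p \<cdot> pc\<close> and \<open>\<epsilon> = \<nu>\<^sup>t\<close> for a block \<open>\<alpha>\<close> of length \<open>t\<close>. Started at \<open>\<sharp>\<close>, the
  chain performs independent excursions, each a depth-first exploration of a random tree of blocks
  in which every block has each of its \<open>r\<close> children with probability \<open>\<nu>\<close>. An excursion visits
  \<open>s\<^sub>i\<^sup>\<alpha>\<close> with probability exactly \<open>\<epsilon>\<close>, and this visiting probability is an explicit harmonic
  function of the starting state. Hence the hitting time \<open>T\<close> satisfies \<open>P(T \<le> N) \<le> \<epsilon> N\<close>,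
  which forces \<open>E T \<ge> 1 / (8 \<epsilon>)\<close>. Since \<open>\<nu> r < 1\<close> the tree is subcritical and the expected
  length of an excursion is a finite constant \<open>1 + \<tau>\<close> (\<open>\<tau> = subtree_time\<close>); the expected time
  to reach \<open>\<sharp>\<close> plus \<open>(1 + \<tau>) / \<epsilon>\<close> times the probability of reaching \<open>\<sharp>\<close> before the target
  is a Lyapunov function for the target, so \<open>E T \<le> (1 + \<tau>) / \<epsilon>\<close>.\<close>

section \<open>Means of defective distributions on the naturals\<close>

definition defective_mean :: "(nat \<Rightarrow> ennreal) \<Rightarrow> ennreal" where
  "defective_mean q = (\<Sum>n. of_nat n * q n) + (if (\<Sum>n. q n) < 1 then \<infinity> else 0)"

lemma mult_suminf_le_suminf_index_mult:
  fixes q :: "nat \<Rightarrow> ennreal"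
  shows "of_nat M * (\<Sum>n. q n) \<le> (\<Sum>n. of_nat n * q n) + of_nat M * (\<Sum>n<M. q n)"
proof -
  have pointwise: "of_nat M * q n \<le> of_nat n * q n + (if n < M then of_nat M * q n else 0)" for n
    by (cases "n < M") (auto intro: mult_right_mono)
  have "of_nat M * (\<Sum>n. q n) = (\<Sum>n. of_nat M * q n)"
    by simp
  also have "\<dots> \<le> (\<Sum>n. of_nat n * q n + (if n < M then of_nat M * q n else 0))"
    by (rule suminf_le[OF pointwise]) auto
  also have "\<dots> = (\<Sum>n. of_nat n * q n) + (\<Sum>n. if n < M then of_nat M * q n else 0)"
    by (rule suminf_add[symmetric]) auto
  also have "(\<Sum>n. if n < M then of_nat M * q n else 0) = (\<Sum>n<M. of_nat M * q n)"
    by (subst suminf_finite[of "{..<M}"]) auto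
  finally show ?thesis
    by (simp add: sum_distrib_left)
qed

lemma le_of_parabola_bounds:
  fixes \<epsilon> x :: real
  assumes "0 < \<epsilon>" and bound: "\<And>M::nat. 1 \<le> M \<Longrightarrow> real M * (1 - \<epsilon> * (real M - 1)) \<le> x"
  shows "1 / (8 * \<epsilon>) \<le> x"
proof (cases "\<epsilon> \<ge> 1/4")
  case True
  then have "1 / (8 * \<epsilon>) \<le> 1"
    by (simp add: divide_simps)
  moreover have "1 \<le> x"
    using bound[of 1] by simp
  ultimately show ?thesis
    by linarith
next
  case False
  \<comment> \<open>\<open>M \<approx> 1 / (2 \<epsilon>)\<close> keeps the factor \<open>1 - \<epsilon> (M - 1)\<close> above \<open>1/2\<close>.\<close>
  define M where "M = nat \<lfloor>1 / (2 * \<epsilon>)\<rfloor>"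
  have big: "2 < 1 / (2 * \<epsilon>)"
    using False \<open>0 < \<epsilon>\<close> by (simp add: divide_simps)
  have M: "real M \<le> 1 / (2 * \<epsilon>)" "1 / (2 * \<epsilon>) - 1 < real M" "1 \<le> M"
    using big unfolding M_def by linarith+
  have "\<epsilon> * real M \<le> 1 / 2"
    using M(1) \<open>0 < \<epsilon>\<close> by (simp add: divide_simps mult_ac)
  then have "real M * (1 / 2) \<le> real M * (1 - \<epsilon> * (real M - 1))"
    using \<open>0 < \<epsilon>\<close> by (intro mult_left_mono) (simp_all add: algebra_simps)
  also have "\<dots> \<le> x"
    using bound[OF M(3)] .
  finally have "real M / 2 \<le> x"
    by simp
  moreover have "1 / (8 * \<epsilon>) \<le> (1 / (2 * \<epsilon>) - 1) / 2"
    using False \<open>0 < \<epsilon>\<close> by (simp add: divide_simps)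
  moreover have "(1 / (2 * \<epsilon>) - 1) / 2 \<le> real M / 2"
    using M(2) by simp
  ultimately show ?thesis
    by linarith
qed

lemma defective_mean_ge:
  fixes q :: "nat \<Rightarrow> real"
  assumes q_nonneg: "\<And>n. 0 \<le> q n" and "0 \<le> \<epsilon>"
    and partial_le: "\<And>N. (\<Sum>k\<le>N. q k) \<le> \<epsilon> * real N"
  shows "ennreal (1 / 8) * inverse (ennreal \<epsilon>) \<le> defective_mean (\<lambda>n. ennreal (q n))"
proof -
  define X where "X = (\<Sum>n. of_nat n * ennreal (q n))"
  have mean: "defective_mean (\<lambda>n. ennreal (q n)) = X + (if (\<Sum>n. ennreal (q n)) < 1 then \<infinity> else 0)"
    by (simp add: defective_mean_def X_def)
  show ?thesis
  proof (cases "(\<Sum>n. ennreal (q n)) < 1 \<or> X = \<infinity>")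
    case True
    then show ?thesis
      by (auto simp: mean)
  next
    case False
    then have total: "1 \<le> (\<Sum>n. ennreal (q n))" and "X \<noteq> \<infinity>"
      by auto
    then obtain x where x: "X = ennreal x" "0 \<le> x"
      by (cases X) auto
    have "\<epsilon> \<noteq> 0"
    proof
      assume "\<epsilon> = 0"
      have "q n = 0" for n
      proof -
        have "q n \<le> (\<Sum>k\<le>n. q k)"
          by (rule member_le_sum) (auto simp: q_nonneg)
        then show ?thesis
          using partial_le[of n] q_nonneg[of n] \<open>\<epsilon> = 0\<close> by simp
      qed
      then show False
        using total by simp
    qed
    then have "0 < \<epsilon>"
      using \<open>0 \<le> \<epsilon>\<close> by simp
    \<comment> \<open>Markov's inequality \<open>M P(T \<ge> M) \<le> E T\<close>, with \<open>P(T < M) \<le> \<epsilon> (M - 1)\<close>.\<close>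
    have "real M * (1 - \<epsilon> * (real M - 1)) \<le> x" if "1 \<le> M" for M :: nat
    proof -
      have "(\<Sum>n<M. q n) \<le> \<epsilon> * (real M - 1)"
        using partial_le[of "M - 1"] that by (simp add: lessThan_Suc_atMost[symmetric] of_nat_diff)
      then have bound: "real M * (\<Sum>n<M. q n) \<le> real M * (\<epsilon> * (real M - 1))"
        by (rule mult_left_mono) simp
      have "ennreal (real M) \<le> of_nat M * (\<Sum>n. ennreal (q n))"
        using mult_left_mono[OF total, of "of_nat M"] by (simp add: ennreal_of_nat_eq_real_of_nat)
      also have "\<dots> \<le> X + of_nat M * (\<Sum>n<M. ennreal (q n))"
        unfolding X_def by (rule mult_suminf_le_suminf_index_mult)
      also have "\<dots> = ennreal (x + real M * (\<Sum>n<M. q n))"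
        using x q_nonneg by (simp add: sum_ennreal ennreal_mult ennreal_plus sum_nonneg
            ennreal_of_nat_eq_real_of_nat)
      finally have "real M \<le> x + real M * (\<Sum>n<M. q n)"
        using x q_nonneg by (subst (asm) ennreal_le_iff) (simp_all add: sum_nonneg)
      then show ?thesis
        using bound by (simp add: algebra_simps)
    qed
    then have "1 / (8 * \<epsilon>) \<le> x"
      by (rule le_of_parabola_bounds[OF \<open>0 < \<epsilon>\<close>])
    moreover have "ennreal (1 / 8) * inverse (ennreal \<epsilon>) = ennreal (1 / (8 * \<epsilon>))"
      using \<open>0 < \<epsilon>\<close> by (simp add: inverse_ennreal ennreal_mult[symmetric] inverse_eq_divide)
    ultimately show ?thesis
      by (simp add: mean x ennreal_leI)
  qed
qed

lemma index_weighted_sum_le_tail_sum: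
  fixes q :: "nat \<Rightarrow> real"
  assumes q_nonneg: "\<And>n. 0 \<le> q n" and partial_le_1: "\<And>N. (\<Sum>k\<le>N. q k) \<le> 1"
  shows "(\<Sum>k<N. real k * q k) \<le> (\<Sum>k<N. 1 - (\<Sum>j\<le>k. q j))"
proof -
  have summation_by_parts: "(\<Sum>k\<le>N. real k * q k) = real N * (\<Sum>j\<le>N. q j) - (\<Sum>k<N. \<Sum>j\<le>k. q j)"
    by (induction N) (simp_all add: algebra_simps)
  have "(\<Sum>k<N. real k * q k) \<le> (\<Sum>k\<le>N. real k * q k)"
    using q_nonneg by (intro sum_mono2) auto
  also have "\<dots> \<le> real N - (\<Sum>k<N. \<Sum>j\<le>k. q j)"
    using mult_left_mono[OF partial_le_1[of N], of "real N"] by (simp add: summation_by_parts)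
  finally show ?thesis
    by (simp add: sum_subtractf)
qed

lemma defective_mean_le:
  fixes q :: "nat \<Rightarrow> real"
  assumes q_nonneg: "\<And>n. 0 \<le> q n" and partial_le_1: "\<And>N. (\<Sum>k\<le>N. q k) \<le> 1"
    and tail_le: "\<And>N. (\<Sum>k<N. 1 - (\<Sum>j\<le>k. q j)) \<le> H"
  shows "defective_mean (\<lambda>n. ennreal (q n)) \<le> ennreal H"
proof -
  \<comment> \<open>A positive mass \<open>1 - s\<close> at \<open>\<infinity>\<close> would make the truncated means grow like \<open>N (1 - s)\<close>.\<close>
  have total: "\<not> (\<Sum>n. ennreal (q n)) < 1"
  proof
    assume "(\<Sum>n. ennreal (q n)) < 1"
    then obtain s where s: "(\<Sum>n. ennreal (q n)) = ennreal s" "0 \<le> s" "s < 1"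
      by (cases "\<Sum>n. ennreal (q n)") (auto simp: ennreal_less_iff top_unique)
    have "ennreal (\<Sum>k\<le>K. q k) \<le> ennreal s" for K
    proof -
      have "ennreal (\<Sum>k\<le>K. q k) = (\<Sum>k<Suc K. ennreal (q k))"
        using q_nonneg by (simp add: sum_ennreal lessThan_Suc_atMost)
      also have "\<dots> \<le> ennreal s"
        unfolding s(1)[symmetric] by (rule sum_le_suminf) auto
      finally show ?thesis .
    qed
    then have partial_le_s: "(\<Sum>k\<le>K. q k) \<le> s" for K
      using s(2) by (simp add: ennreal_le_iff)
    obtain N :: nat where N: "H / (1 - s) < real N"
      using reals_Archimedean2 by blast
    have "real N * (1 - s) \<le> (\<Sum>k<N. 1 - (\<Sum>j\<le>k. q j))"
      using sum_mono[of "{..<N}" "\<lambda>_. 1 - s"] partial_le_s by simp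
    also have "\<dots> \<le> H"
      by (rule tail_le)
    finally show False
      using N s(3) by (simp add: divide_less_eq)
  qed
  have "(\<Sum>k<N. of_nat k * ennreal (q k)) \<le> ennreal H" for N
  proof -
    have "(\<Sum>k<N. of_nat k * ennreal (q k)) = ennreal (\<Sum>k<N. real k * q k)"
      using q_nonneg by (simp add: sum_ennreal[symmetric] ennreal_mult ennreal_of_nat_eq_real_of_nat)
    also have "\<dots> \<le> ennreal H"
      using index_weighted_sum_le_tail_sum[OF q_nonneg partial_le_1, of N] tail_le[of N]
      by (intro ennreal_leI) linarith
    finally show ?thesis .
  qed
  then show ?thesis
    using total by (simp add: defective_mean_def suminf_eq_SUP SUP_least)
qed

section \<open>Hitting times for Markov transition operators\<close>

locale markov_operator =
  fixes P :: "('s \<Rightarrow> real) \<Rightarrow> 's \<Rightarrow> real"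
  assumes P_add: "P (\<lambda>z. f z + g z) x = P f x + P g x"
    and P_scale: "P (\<lambda>z. c * f z) x = c * P f x"
    and P_const: "P (\<lambda>z. c) x = c"
    and P_nonneg: "(\<And>z. 0 \<le> f z) \<Longrightarrow> 0 \<le> P f x"
begin

lemma P_diff: "P (\<lambda>z. f z - g z) x = P f x - P g x"
  using P_add[of f "\<lambda>z. - 1 * g z"] P_scale[of "- 1" g] by simp

lemma P_sum: "P (\<lambda>z. \<Sum>k\<in>A. f k z) x = (\<Sum>k\<in>A. P (f k) x)"
  by (induction A rule: infinite_finite_induct) (simp_all add: P_const P_add)

lemma P_mono: "(\<And>z. f z \<le> g z) \<Longrightarrow> P f x \<le> P g x"
  using P_nonneg[of "\<lambda>z. g z - f z"] by (simp add: P_diff)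

text \<open>The chain started in \<open>X\<close> never leaves \<open>X\<close>.\<close>
definition closed_set :: "'s set \<Rightarrow> bool" where
  "closed_set X \<longleftrightarrow> (\<forall>x\<in>X. \<forall>f g. (\<forall>z\<in>X. f z = g z) \<longrightarrow> P f x = P g x)"

lemma P_mono_on:
  assumes "closed_set X" "x \<in> X" "\<And>z. z \<in> X \<Longrightarrow> f z \<le> g z"
  shows "P f x \<le> P g x"
proof -
  have "P f x = P (\<lambda>z. if z \<in> X then f z else g z) x"
    using assms(1,2) unfolding closed_set_def by auto
  also have "\<dots> \<le> P g x"
    using assms(3) by (intro P_mono) auto
  finally show ?thesis .
qed

text \<open>\<open>first_passage y n x = P\<^sub>x(T\<^sub>y = n)\<close>, \<open>hit_prob y N x = P\<^sub>x(T\<^sub>y \<le> N)\<close> and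
  \<open>truncated_hit_time y N x = E\<^sub>x min T\<^sub>y N\<close> for the hitting time \<open>T\<^sub>y\<close> of \<open>y\<close>.\<close>
fun first_passage :: "'s \<Rightarrow> nat \<Rightarrow> 's \<Rightarrow> real" where
  "first_passage y 0 x = (if x = y then 1 else 0)"
| "first_passage y (Suc n) x = (if x = y then 0 else P (first_passage y n) x)"

definition hit_prob :: "'s \<Rightarrow> nat \<Rightarrow> 's \<Rightarrow> real" where
  "hit_prob y N x = (\<Sum>k\<le>N. first_passage y k x)"

definition truncated_hit_time :: "'s \<Rightarrow> nat \<Rightarrow> 's \<Rightarrow> real" where
  "truncated_hit_time y N x = (\<Sum>k<N. 1 - hit_prob y k x)"

lemma first_passage_nonneg: "0 \<le> first_passage y n x"
  by (induction n arbitrary: x) (simp_all add: P_nonneg)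

lemma hit_prob_0: "hit_prob y 0 x = (if x = y then 1 else 0)"
  by (simp add: hit_prob_def)

lemma hit_prob_Suc: "hit_prob y (Suc N) x = (if x = y then 1 else P (hit_prob y N) x)"
  unfolding hit_prob_def sum.atMost_Suc_shift by (simp add: P_sum)

lemma hit_prob_le_1: "hit_prob y N x \<le> 1"
proof (induction N arbitrary: x)
  case (Suc N)
  then show ?case
    using P_mono[of "hit_prob y N" "\<lambda>_. 1"] by (simp add: hit_prob_Suc P_const)
qed (simp add: hit_prob_0)

lemma truncated_hit_time_Suc:
  "truncated_hit_time y (Suc N) x = (if x = y then 0 else 1 + P (truncated_hit_time y N) x)"
  unfolding truncated_hit_time_def sum.lessThan_Suc_shift
  by (simp add: hit_prob_0 hit_prob_Suc P_sum P_diff P_const)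

lemma hit_prob_le_superharmonic:
  assumes X: "closed_set X" "x \<in> X" and "0 \<le> \<epsilon>"
    and \<phi>_nonneg: "\<And>z. z \<in> X \<Longrightarrow> 0 \<le> \<phi> z" and "1 \<le> \<phi> y"
    and \<phi>_super: "\<And>z. z \<in> X \<Longrightarrow> z \<noteq> y \<Longrightarrow> P \<phi> z \<le> \<phi> z + \<epsilon>"
  shows "hit_prob y N x \<le> \<phi> x + \<epsilon> * real N"
  using \<open>x \<in> X\<close>
proof (induction N arbitrary: x)
  case 0
  then show ?case
    using \<phi>_nonneg \<open>1 \<le> \<phi> y\<close> by (simp add: hit_prob_0)
next
  case (Suc N)
  show ?case
  proof (cases "x = y")
    case True
    then show ?thesis
      using \<open>1 \<le> \<phi> y\<close> \<open>0 \<le> \<epsilon>\<close> by (simp add: hit_prob_Suc add_increasing2)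
  next
    case False
    have "hit_prob y (Suc N) x = P (hit_prob y N) x"
      using False by (simp add: hit_prob_Suc)
    also have "\<dots> \<le> P (\<lambda>z. \<phi> z + \<epsilon> * real N) x"
      using Suc by (intro P_mono_on[OF X(1)])
    also have "\<dots> = P \<phi> x + \<epsilon> * real N"
      by (simp add: P_add P_const)
    also have "\<dots> \<le> \<phi> x + \<epsilon> * real (Suc N)"
      using \<phi>_super[OF Suc.prems False] by (simp add: algebra_simps)
    finally show ?thesis .
  qed
qed

lemma truncated_hit_time_le_Lyapunov:
  assumes X: "closed_set X" "x \<in> X"
    and V_nonneg: "\<And>z. z \<in> X \<Longrightarrow> 0 \<le> V z"
    and V_drift: "\<And>z. z \<in> X \<Longrightarrow> z \<noteq> y \<Longrightarrow> 1 + P V z \<le> V z"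
  shows "truncated_hit_time y N x \<le> V x"
  using \<open>x \<in> X\<close>
proof (induction N arbitrary: x)
  case 0
  then show ?case
    using V_nonneg by (simp add: truncated_hit_time_def)
next
  case (Suc N)
  show ?case
  proof (cases "x = y")
    case True
    then show ?thesis
      using V_nonneg[OF Suc.prems] by (simp add: truncated_hit_time_Suc)
  next
    case False
    have "truncated_hit_time y (Suc N) x = 1 + P (truncated_hit_time y N) x"
      using False by (simp add: truncated_hit_time_Suc)
    also have "\<dots> \<le> 1 + P V x"
      using Suc by (simp add: P_mono_on[OF X(1)])
    also have "\<dots> \<le> V x"
      by (rule V_drift[OF Suc.prems False])
    finally show ?thesis .
  qed
qed

end

section \<open>The looped chain\<close>

lemma infsum_point_mass: "(\<Sum>\<^sub>\<infinity>z. if z = a then v else 0) = (v :: ennreal)"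
proof -
  have "(\<Sum>\<^sub>\<infinity>z. if z = a then v else 0) = (\<Sum>\<^sub>\<infinity>z\<in>{a}. if z = a then v else 0)"
    by (rule infsum_cong_neutral) auto
  then show ?thesis
    by simp
qed

lemma infsum_two_point_masses:
  fixes f :: "'a \<Rightarrow> ennreal"
  assumes "0 \<le> c" "0 \<le> d"
  shows "(\<Sum>\<^sub>\<infinity>z. ennreal ((if z = a then c else 0) + (if z = b then d else 0)) * f z)
     = ennreal c * f a + ennreal d * f b"
proof -
  have "(\<Sum>\<^sub>\<infinity>z. ennreal ((if z = a then c else 0) + (if z = b then d else 0)) * f z)
     = (\<Sum>\<^sub>\<infinity>z. (if z = a then ennreal c * f a else 0) + (if z = b then ennreal d * f b else 0))"
    using assms by (intro infsum_cong) (auto simp: distrib_right)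
  also have "\<dots> = (\<Sum>\<^sub>\<infinity>z. if z = a then ennreal c * f a else 0) + (\<Sum>\<^sub>\<infinity>z. if z = b then ennreal d * f b else 0)"
    by (intro infsum_add nonneg_summable_on_complete) auto
  finally show ?thesis
    by (simp only: infsum_point_mass)
qed

definition trans_op :: "nat \<Rightarrow> real \<Rightarrow> real \<Rightarrow> (state \<Rightarrow> real) \<Rightarrow> state \<Rightarrow> real" where
  "trans_op r p pc f x = (case x of
       Sharp \<Rightarrow> f (S 1 [])
     | S i \<alpha> \<Rightarrow> p * f (C i \<alpha>) + (1 - p) * f (nxt r i \<alpha>)
     | C i \<alpha> \<Rightarrow> pc * f (S 1 (\<alpha> @ [i])) + (1 - pc) * f (nxt r i \<alpha>))"

definition valid_states :: "nat \<Rightarrow> state set" where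
  "valid_states r = {x. case x of
       Sharp \<Rightarrow> True
     | S j \<beta> \<Rightarrow> j \<in> {1..r} \<and> set \<beta> \<subseteq> {1..r}
     | C j \<beta> \<Rightarrow> j \<in> {1..r} \<and> set \<beta> \<subseteq> {1..r}}"

lemma ret_cases:
  assumes "set \<beta> \<subseteq> {1..r}"
  obtains (all_r) k where "\<beta> = replicate k r" "ret r \<beta> = Sharp"
  | (last_below_r) \<gamma> c k where "\<beta> = \<gamma> @ [c] @ replicate k r" "1 \<le> c" "c < r" "ret r \<beta> = S (Suc c) \<gamma>"
proof -
  define d where "d = dropWhile (\<lambda>x. x = r) (rev \<beta>)"
  define k where "k = length (takeWhile (\<lambda>x. x = r) (rev \<beta>))"
  have "takeWhile (\<lambda>x. x = r) (rev \<beta>) = replicate k r"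
    unfolding k_def by (rule replicate_length_same[symmetric]) (auto dest: set_takeWhileD)
  then have \<beta>: "\<beta> = rev d @ replicate k r"
    unfolding d_def by (metis rev_append rev_replicate rev_rev_ident takeWhile_dropWhile_id)
  show ?thesis
  proof (cases d)
    case Nil
    moreover have "ret r \<beta> = Sharp"
      unfolding ret_def d_def[symmetric] using Nil by simp
    ultimately show ?thesis
      using all_r \<beta> by simp
  next
    case (Cons c d')
    have "c \<noteq> r"
      using Cons unfolding d_def by (simp add: dropWhile_eq_Cons_conv)
    moreover have "c \<in> {1..r}"
      using assms \<beta> Cons by auto
    moreover have "ret r \<beta> = S (Suc c) (rev d')"
      unfolding ret_def d_def[symmetric] using Cons by simp
    ultimately show ?thesis
      using last_below_r[of "rev d'" c k] \<beta> Cons by simp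
  qed
qed

lemma hit_time_eq_defective_mean:
  "hit_time r p pc x y = defective_mean (\<lambda>n. fp r p pc n x y)"
  by (simp add: hit_time_def defective_mean_def)

locale looped_chain =
  fixes r :: nat and p pc :: real
  assumes r_pos: "1 \<le> r" and p_prob: "0 \<le> p" "p \<le> 1" and pc_prob: "0 \<le> pc" "pc \<le> 1"
begin

lemma p_pc_prob: "0 \<le> p * pc" "p * pc \<le> 1"
  using p_prob pc_prob by (simp_all add: mult_le_one)

sublocale markov_operator "trans_op r p pc"
proof
  fix f :: "state \<Rightarrow> real" and x
  assume "\<And>z. 0 \<le> f z"
  then show "0 \<le> trans_op r p pc f x"
    using p_prob pc_prob by (auto simp: trans_op_def split: state.split)
qed (auto simp: trans_op_def algebra_simps split: state.split)

lemma infsum_trans_mult: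
  assumes "\<And>z. 0 \<le> f z"
  shows "(\<Sum>\<^sub>\<infinity>z. ennreal (trans r p pc x z) * ennreal (f z)) = ennreal (trans_op r p pc f x)"
proof (cases x)
  case Sharp
  then show ?thesis
    using infsum_two_point_masses[of 1 0 "S 1 []" "S 1 []" "\<lambda>z. ennreal (f z)"]
    by (simp add: trans_def trans_op_def)
next
  case (S i \<alpha>)
  then show ?thesis
    using infsum_two_point_masses[of p "1 - p" "C i \<alpha>" "nxt r i \<alpha>" "\<lambda>z. ennreal (f z)"] p_prob assms
    by (simp add: trans_def trans_op_def ennreal_mult ennreal_plus)
next
  case (C i \<alpha>)
  then show ?thesis
    using infsum_two_point_masses[of pc "1 - pc" "S 1 (\<alpha> @ [i])" "nxt r i \<alpha>" "\<lambda>z. ennreal (f z)"] pc_prob assms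
    by (simp add: trans_def trans_op_def ennreal_mult ennreal_plus)
qed

lemma fp_eq_first_passage: "fp r p pc n x y = ennreal (first_passage y n x)"
  by (induction n arbitrary: x) (simp_all add: infsum_trans_mult first_passage_nonneg)

lemma nxt_valid:
  assumes "j \<in> {1..r}" "set \<beta> \<subseteq> {1..r}"
  shows "nxt r j \<beta> \<in> valid_states r"
proof (cases "j < r")
  case True
  then show ?thesis
    using assms by (simp add: nxt_def valid_states_def)
next
  case False
  from assms(2) show ?thesis
  proof (cases rule: ret_cases)
    case (last_below_r \<gamma> c k)
    then show ?thesis
      using False assms by (auto simp: nxt_def valid_states_def)
  qed (use False in \<open>simp_all add: nxt_def valid_states_def\<close>)
qed

lemma closed_valid_states: "closed_set (valid_states r)"
  unfolding closed_set_def
proof (intro ballI allI impI)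
  fix x and f g :: "state \<Rightarrow> real"
  assume "x \<in> valid_states r" "\<forall>z\<in>valid_states r. f z = g z"
  then show "trans_op r p pc f x = trans_op r p pc g x"
    using r_pos nxt_valid by (auto simp: trans_op_def valid_states_def split: state.split)
qed

lemma Sharp_valid: "Sharp \<in> valid_states r"
  by (simp add: valid_states_def)

end

section \<open>Hitting probability of a block\<close>

text \<open>Encode \<open>s\<^sub>j\<^sup>\<beta>\<close> by the word \<open>\<beta> \<cdot> j\<close>. Between two visits of \<open>\<sharp>\<close> the chain visits words in
  depth-first order; when \<open>\<nu> r < 1\<close> it moves from each word to its right sibling almost surely,
  and to its first child with probability \<open>\<nu>\<close>. Hence from the word \<open>w\<close> it visits the target
  word \<open>u\<close> before \<open>\<sharp>\<close> with probability \<open>\<nu>\<^sup>k\<close>, where \<open>k\<close> counts the descents still needed, and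
  with probability \<open>0\<close> if \<open>u\<close> precedes \<open>w\<close>: this is \<open>reach_weight \<nu> w u\<close>. The same probability
  once the subtree at \<open>w\<close> is finished is \<open>reach_weight_after\<close>, and from \<open>c\<^sub>j\<^sup>\<beta>\<close> it is
  \<open>reach_weight_choice\<close>; the three differ only when \<open>w\<close> is a prefix of \<open>u\<close> (argument \<open>g\<close>).\<close>
fun dfs_weight :: "(nat list \<Rightarrow> real) \<Rightarrow> real \<Rightarrow> nat list \<Rightarrow> nat list \<Rightarrow> real" where
  "dfs_weight g v [] u = g u"
| "dfs_weight g v (x # w) [] = 0"
| "dfs_weight g v (x # w) (y # u) =
     (if x < y then v ^ length u else if y < x then 0 else dfs_weight g v w u)"

abbreviation reach_weight :: "real \<Rightarrow> nat list \<Rightarrow> nat list \<Rightarrow> real" where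
  "reach_weight v \<equiv> dfs_weight (\<lambda>u. v ^ length u) v"

abbreviation reach_weight_after :: "real \<Rightarrow> nat list \<Rightarrow> nat list \<Rightarrow> real" where
  "reach_weight_after v \<equiv> dfs_weight (\<lambda>_. 0) v"

abbreviation reach_weight_choice :: "real \<Rightarrow> real \<Rightarrow> nat list \<Rightarrow> nat list \<Rightarrow> real" where
  "reach_weight_choice v c \<equiv> dfs_weight (\<lambda>u. case u of [] \<Rightarrow> 0 | _ # u' \<Rightarrow> c * v ^ length u') v"

lemma dfs_weight_bounds:
  assumes "0 \<le> v" "v \<le> 1" "\<And>u. 0 \<le> g u" "\<And>u. g u \<le> 1"
  shows "0 \<le> dfs_weight g v w u \<and> dfs_weight g v w u \<le> 1"
  using assms by (induction g v w u rule: dfs_weight.induct) (simp_all add: power_le_one)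

lemma reach_weight_self: "reach_weight v u u = 1"
  by (induction u) auto

lemma reach_weight_root:
  assumes "\<forall>y\<in>set \<alpha>. 1 \<le> y" "1 \<le> i"
  shows "reach_weight v [1] (\<alpha> @ [i]) = v ^ length \<alpha>"
  using assms by (cases \<alpha>) (auto simp: le_Suc_eq)

lemma reach_weight_Suc_last: "reach_weight v (w @ [Suc j]) u = reach_weight_after v (w @ [j]) u"
proof (induction w arbitrary: u)
  case Nil
  then show ?case
    by (cases u) auto
next
  case (Cons x w)
  then show ?case
    by (cases u) auto
qed

lemma reach_weight_after_append_max:
  assumes "\<forall>y\<in>set u. y \<le> m"
  shows "reach_weight_after v (w @ replicate k m) u = reach_weight_after v w u"
proof (induction k)
  case (Suc k)
  have snoc_max: "\<forall>y\<in>set u'. y \<le> m \<Longrightarrow> reach_weight_after v (w' @ [m]) u' = reach_weight_after v w' u'"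
    for w' u'
  proof (induction w' arbitrary: u')
    case Nil
    then show ?case
      by (cases u') auto
  next
    case (Cons x w')
    then show ?case
      by (cases u') auto
  qed
  have "w @ replicate (Suc k) m = (w @ replicate k m) @ [m]"
    by (simp add: replicate_append_same)
  then show ?case
    using snoc_max[of u "w @ replicate k m"] Suc assms by simp
qed simp

lemma reach_weight_step_S:
  "w \<noteq> u \<Longrightarrow> p * reach_weight_choice (p * c) c w u + (1 - p) * reach_weight_after (p * c) w u
     = reach_weight (p * c) w u"
proof (induction w arbitrary: u)
  case Nil
  then show ?case
    by (cases u) auto
next
  case (Cons x w)
  then show ?case
    by (cases u) (auto simp: algebra_simps)
qed

lemma reach_weight_step_C:
  "\<forall>y\<in>set u. 1 \<le> y \<Longrightarrow> c * reach_weight v (w @ [1]) u + (1 - c) * reach_weight_after v w u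
     = reach_weight_choice v c w u"
proof (induction w arbitrary: u)
  case Nil
  then show ?case
    by (cases u) (auto simp: le_Suc_eq)
next
  case (Cons x w)
  then show ?case
    by (cases u) (auto simp: algebra_simps)
qed

context looped_chain
begin

definition target_prob :: "nat list \<Rightarrow> state \<Rightarrow> real" where
  "target_prob u x = (case x of
       Sharp \<Rightarrow> 0
     | S j \<beta> \<Rightarrow> reach_weight (p * pc) (\<beta> @ [j]) u
     | C j \<beta> \<Rightarrow> reach_weight_choice (p * pc) pc (\<beta> @ [j]) u)"

lemma target_prob_Sharp [simp]: "target_prob u Sharp = 0"
  by (simp add: target_prob_def)

lemma target_prob_target: "target_prob (\<alpha> @ [i]) (S i \<alpha>) = 1"
  by (simp add: target_prob_def reach_weight_self)

lemma target_prob_bounds: "0 \<le> target_prob u x" "target_prob u x \<le> 1"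
  using dfs_weight_bounds[OF p_pc_prob] pc_prob p_pc_prob
  by (auto simp: target_prob_def power_le_one mult_le_one split: state.split list.split)

lemma target_prob_nxt:
  assumes "j \<in> {1..r}" "set \<beta> \<subseteq> {1..r}" "set u \<subseteq> {1..r}"
  shows "target_prob u (nxt r j \<beta>) = reach_weight_after (p * pc) (\<beta> @ [j]) u"
proof (cases "j < r")
  case True
  then show ?thesis
    using reach_weight_Suc_last[of "p * pc" \<beta> j u] by (simp add: nxt_def target_prob_def)
next
  case False
  then have "j = r"
    using assms(1) by simp
  have u_le_r: "\<forall>y\<in>set u. y \<le> r"
    using assms(3) by auto
  from assms(2) show ?thesis
  proof (cases rule: ret_cases)
    case (all_r k)
    then show ?thesis
      using \<open>j = r\<close> reach_weight_after_append_max[OF u_le_r, of "p * pc" "[]" "Suc k"]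
      by (simp add: nxt_def target_prob_def replicate_append_same)
  next
    case (last_below_r \<gamma> c k)
    then show ?thesis
      using \<open>j = r\<close> reach_weight_after_append_max[OF u_le_r, of "p * pc" "\<gamma> @ [c]" "Suc k"]
        reach_weight_Suc_last[of "p * pc" \<gamma> c u]
      by (simp add: nxt_def target_prob_def replicate_append_same)
  qed
qed

lemma target_prob_harmonic:
  assumes "x \<in> valid_states r" "x \<noteq> Sharp" "x \<noteq> S i \<alpha>" "set (\<alpha> @ [i]) \<subseteq> {1..r}"
  shows "trans_op r p pc (target_prob (\<alpha> @ [i])) x = target_prob (\<alpha> @ [i]) x"
proof (cases x)
  case (S j \<beta>)
  then have "j \<in> {1..r}" "set \<beta> \<subseteq> {1..r}" "\<beta> @ [j] \<noteq> \<alpha> @ [i]"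
    using assms(1,3) by (auto simp: valid_states_def)
  then show ?thesis
    using S assms(4) target_prob_nxt reach_weight_step_S[of "\<beta> @ [j]" "\<alpha> @ [i]" p pc]
    by (simp add: trans_op_def target_prob_def)
next
  case (C j \<beta>)
  then have "j \<in> {1..r}" "set \<beta> \<subseteq> {1..r}"
    using assms(1) by (auto simp: valid_states_def)
  moreover have "\<forall>y\<in>set (\<alpha> @ [i]). 1 \<le> y"
    using assms(4) by auto
  ultimately show ?thesis
    using C assms(4) target_prob_nxt reach_weight_step_C[of "\<alpha> @ [i]" pc "p * pc" "\<beta> @ [j]"]
    by (simp add: trans_op_def target_prob_def)
qed (use assms(2) in simp)

lemma trans_op_target_prob_Sharp:
  assumes "set \<alpha> \<subseteq> {1..r}" "i \<in> {1..r}"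
  shows "trans_op r p pc (target_prob (\<alpha> @ [i])) Sharp = (p * pc) ^ length \<alpha>"
  using assms reach_weight_root[of \<alpha> i "p * pc"] by (force simp: trans_op_def target_prob_def)

lemma hit_prob_from_Sharp_le:
  assumes "set \<alpha> \<subseteq> {1..r}" "i \<in> {1..r}"
  shows "hit_prob (S i \<alpha>) N Sharp \<le> (p * pc) ^ length \<alpha> * real N"
proof -
  have super: "trans_op r p pc (target_prob (\<alpha> @ [i])) z
      \<le> target_prob (\<alpha> @ [i]) z + (p * pc) ^ length \<alpha>"
    if "z \<in> valid_states r" "z \<noteq> S i \<alpha>" for z
    using that assms target_prob_harmonic[of z i \<alpha>] trans_op_target_prob_Sharp p_pc_prob
    by (cases "z = Sharp") simp_all
  have "hit_prob (S i \<alpha>) N Sharp \<le> target_prob (\<alpha> @ [i]) Sharp + (p * pc) ^ length \<alpha> * real N"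
    using super target_prob_bounds(1) p_pc_prob
    by (intro hit_prob_le_superharmonic[OF closed_valid_states])
      (simp_all add: Sharp_valid target_prob_target)
  then show ?thesis
    by simp
qed

lemma hit_time_from_Sharp_ge:
  assumes "set \<alpha> \<subseteq> {1..r}" "i \<in> {1..r}"
  shows "ennreal (1 / 8) * inverse (ennreal (p * pc)) ^ length \<alpha> \<le> hit_time r p pc Sharp (S i \<alpha>)"
proof -
  have "inverse (ennreal (p * pc)) ^ length \<alpha> = inverse (ennreal ((p * pc) ^ length \<alpha>))"
    using p_pc_prob by (simp add: ennreal_inverse_power[symmetric] ennreal_power)
  moreover have "ennreal (1 / 8) * inverse (ennreal ((p * pc) ^ length \<alpha>))
      \<le> defective_mean (\<lambda>n. ennreal (first_passage (S i \<alpha>) n Sharp))"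
    using hit_prob_from_Sharp_le[OF assms] p_pc_prob
    by (intro defective_mean_ge) (simp_all add: first_passage_nonneg hit_prob_def)
  ultimately show ?thesis
    by (simp add: hit_time_eq_defective_mean fp_eq_first_passage)
qed

end

section \<open>Expected time to return to \<open>\<sharp>\<close>\<close>

text \<open>The moves to the right still due at the ancestors' levels before the chain is back at \<open>\<sharp>\<close>.\<close>
definition pending_steps :: "nat \<Rightarrow> nat list \<Rightarrow> nat" where
  "pending_steps r \<beta> = sum_list (map (\<lambda>c. r - c) \<beta>)"

locale subcritical_looped_chain = looped_chain +
  assumes subcritical: "p * pc * real r < 1"
begin

text \<open>The expected time from \<open>s\<^sub>j\<^sup>\<beta>\<close> to \<open>s\<^bsub>j+1\<^esub>\<^sup>\<beta>\<close>: one step, one more via \<open>c\<^sub>j\<^sup>\<beta>\<close> with probability \<open>p\<close>,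
  and with probability \<open>p pc\<close> the exploration of the subtree below, which consists of \<open>r\<close> such moves.\<close>
definition step_time :: real where
  "step_time = (1 + p) / (1 - p * pc * real r)"

definition subtree_time :: real where
  "subtree_time = real r * step_time"

lemma step_time_pos: "0 < step_time"
  using subcritical p_prob by (simp add: step_time_def)

lemma subtree_time_nonneg: "0 \<le> subtree_time"
  using step_time_pos by (simp add: subtree_time_def)

lemma step_time_eq: "step_time = 1 + p + p * pc * subtree_time"
  using subcritical by (simp add: step_time_def subtree_time_def field_simps)

definition time_to_Sharp :: "state \<Rightarrow> real" where
  "time_to_Sharp x = (case x of
       Sharp \<Rightarrow> 0
     | S j \<beta> \<Rightarrow> step_time * (real (r + 1 - j) + real (pending_steps r \<beta>))
     | C j \<beta> \<Rightarrow> 1 + pc * subtree_time + step_time * (real (r - j) + real (pending_steps r \<beta>)))"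

lemma time_to_Sharp_nonneg: "0 \<le> time_to_Sharp x"
  using step_time_pos subtree_time_nonneg pc_prob by (simp add: time_to_Sharp_def split: state.split)

lemma time_to_Sharp_nxt:
  assumes "j \<in> {1..r}" "set \<beta> \<subseteq> {1..r}"
  shows "time_to_Sharp (nxt r j \<beta>) = step_time * (real (r - j) + real (pending_steps r \<beta>))"
proof (cases "j < r")
  case True
  then show ?thesis
    by (simp add: nxt_def time_to_Sharp_def Suc_diff_Suc)
next
  case False
  then have "j = r"
    using assms(1) by simp
  from assms(2) show ?thesis
  proof (cases rule: ret_cases)
    case (all_r k)
    then show ?thesis
      using \<open>j = r\<close> by (simp add: nxt_def time_to_Sharp_def pending_steps_def sum_list_replicate)
  next
    case (last_below_r \<gamma> c k)
    then show ?thesis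
      using \<open>j = r\<close> by (simp add: nxt_def time_to_Sharp_def pending_steps_def algebra_simps)
  qed
qed

lemma time_to_Sharp_drift:
  assumes "x \<in> valid_states r" "x \<noteq> Sharp"
  shows "trans_op r p pc time_to_Sharp x = time_to_Sharp x - 1"
proof (cases x)
  case (S j \<beta>)
  then have valid: "j \<in> {1..r}" "set \<beta> \<subseteq> {1..r}"
    using assms(1) by (auto simp: valid_states_def)
  then have "real (r + 1 - j) = real (r - j) + 1"
    by auto
  then show ?thesis
    unfolding S trans_op_def state.case time_to_Sharp_nxt[OF valid]
    using step_time_eq by (simp add: time_to_Sharp_def algebra_simps)
next
  case (C j \<beta>)
  then have valid: "j \<in> {1..r}" "set \<beta> \<subseteq> {1..r}"
    using assms(1) by (auto simp: valid_states_def)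
  then have "pending_steps r (\<beta> @ [j]) = pending_steps r \<beta> + (r - j)"
    by (simp add: pending_steps_def)
  then show ?thesis
    unfolding C trans_op_def state.case time_to_Sharp_nxt[OF valid]
    by (simp add: time_to_Sharp_def subtree_time_def algebra_simps)
qed (use assms(2) in simp)

lemma truncated_hit_time_from_Sharp_le:
  assumes "set \<alpha> \<subseteq> {1..r}" "i \<in> {1..r}" and pos: "0 < (p * pc) ^ length \<alpha>"
  shows "truncated_hit_time (S i \<alpha>) N Sharp \<le> (1 + subtree_time) / (p * pc) ^ length \<alpha>"
proof -
  define \<epsilon> where "\<epsilon> = (p * pc) ^ length \<alpha>"
  define H where "H = (1 + subtree_time) / \<epsilon>"
  \<comment> \<open>At \<open>\<sharp>\<close> the drift condition holds with equality exactly for this \<open>H\<close>.\<close>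
  define V where "V = (\<lambda>z. time_to_Sharp z + H * (1 - target_prob (\<alpha> @ [i]) z))"
  have "0 < \<epsilon>" "0 \<le> H"
    using pos subtree_time_nonneg by (simp_all add: H_def \<epsilon>_def)
  have PV: "trans_op r p pc V z
      = trans_op r p pc time_to_Sharp z + H * (1 - trans_op r p pc (target_prob (\<alpha> @ [i])) z)" for z
    by (simp add: V_def P_add P_scale P_diff P_const)
  have "trans_op r p pc time_to_Sharp Sharp = subtree_time"
    using r_pos by (simp add: trans_op_def time_to_Sharp_def pending_steps_def subtree_time_def)
  moreover have "trans_op r p pc (target_prob (\<alpha> @ [i])) Sharp = \<epsilon>"
    using trans_op_target_prob_Sharp[OF assms(1,2)] by (simp add: \<epsilon>_def)
  ultimately have "1 + trans_op r p pc V Sharp = V Sharp"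
    unfolding PV using \<open>0 < \<epsilon>\<close> by (simp add: V_def H_def time_to_Sharp_def field_simps)
  then have drift: "1 + trans_op r p pc V z \<le> V z" if "z \<in> valid_states r" "z \<noteq> S i \<alpha>" for z
    using that assms PV time_to_Sharp_drift target_prob_harmonic[of z i \<alpha>]
    by (cases "z = Sharp") (simp_all add: V_def)
  have "V z \<ge> 0" for z
    using \<open>0 \<le> H\<close> time_to_Sharp_nonneg target_prob_bounds(2) by (simp add: V_def)
  then have "truncated_hit_time (S i \<alpha>) N Sharp \<le> V Sharp"
    using drift by (intro truncated_hit_time_le_Lyapunov[OF closed_valid_states Sharp_valid])
  then show ?thesis
    by (simp add: V_def H_def \<epsilon>_def time_to_Sharp_def)
qed

lemma hit_time_from_Sharp_le:
  assumes "set \<alpha> \<subseteq> {1..r}" "i \<in> {1..r}"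
  shows "hit_time r p pc Sharp (S i \<alpha>) \<le> ennreal (1 + subtree_time) * inverse (ennreal (p * pc)) ^ length \<alpha>"
proof (cases "(p * pc) ^ length \<alpha> = 0")
  case True
  then have "p * pc = 0" "length \<alpha> \<noteq> 0"
    by simp_all
  then have "inverse (ennreal (p * pc)) ^ length \<alpha> = top"
    by (simp only: ennreal_0 ennreal_inverse_zero power_top_ennreal neq0_conv)
  then show ?thesis
    using subtree_time_nonneg by (simp add: ennreal_mult_top)
next
  case False
  then have pos: "0 < (p * pc) ^ length \<alpha>"
    by (intro order_le_neq_trans[OF zero_le_power[OF p_pc_prob(1)]]) simp
  have "defective_mean (\<lambda>n. ennreal (first_passage (S i \<alpha>) n Sharp))
      \<le> ennreal ((1 + subtree_time) / (p * pc) ^ length \<alpha>)"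
    using truncated_hit_time_from_Sharp_le[OF assms pos] hit_prob_le_1
    by (intro defective_mean_le) (simp_all add: first_passage_nonneg truncated_hit_time_def hit_prob_def)
  moreover have "ennreal ((1 + subtree_time) / (p * pc) ^ length \<alpha>)
      = ennreal (1 + subtree_time) * inverse (ennreal (p * pc)) ^ length \<alpha>"
    using pos p_pc_prob subtree_time_nonneg
    by (simp add: divide_ennreal[symmetric] divide_ennreal_def ennreal_inverse_power[symmetric] ennreal_power)
  ultimately show ?thesis
    by (simp add: hit_time_eq_defective_mean fp_eq_first_passage)
qed

end

theorem corollary3p6:
  fixes r :: nat and p pc :: real
  assumes "r \<ge> 1" and "0 \<le> p" and "p \<le> 1" and "0 \<le> pc" and "pc \<le> 1"
    and "p * pc * real r < 1"
  shows "\<exists>c1 c2 :: real. 0 < c1 \<and> c1 \<le> c2 \<and>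
    (\<forall>\<alpha> i. set \<alpha> \<subseteq> {1..r} \<longrightarrow> 1 \<le> i \<longrightarrow> i \<le> r \<longrightarrow>
       ennreal c1 * inverse (ennreal (p * pc)) ^ length \<alpha> \<le> hit_time r p pc Sharp (S i \<alpha>) \<and>
       hit_time r p pc Sharp (S i \<alpha>) \<le> ennreal c2 * inverse (ennreal (p * pc)) ^ length \<alpha>)"
proof -
  interpret subcritical_looped_chain r p pc
    using assms by unfold_locales
  show ?thesis
    using hit_time_from_Sharp_ge hit_time_from_Sharp_le subtree_time_nonneg
    by (intro exI[of _ "1 / 8"] exI[of _ "1 + subtree_time"]) auto
qed

end
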